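(* Let $m$ be an odd positive integer and $q\geq 1$. Then $m\#Q_q$ divides $Q_{m+q}$.
   Context: $Q_q$ denotes the $q$-dimensional hypercube graph (vertices are $q$-tuples of $0$'s and $1$'s, adjacent iff they differ in exactly one coordinate). For a graph $G$ and $m\geq 1$, $m\#G$ is the graph obtained by taking two disjoint copies $G'$ and $G''$ of $G$ and joining each vertex $v'\in V(G')$ to the corresponding vertex $v''\in V(G'')$ by a path with $m$ edges, these new paths being internally vertex-disjoint from each other and from $G'\cup G''$. For graphs $H$ and $G$, "$H$ divides $G$" means there is a collection of subgraphs $H_i$ of $G$, each isomorphic to $H$, such that $E(G)$ is the disjoint union of the edge sets $E(H_i)$. *)

theory Defs
  imports Main
begin

text \<open>A (simple, undirected) graph is a pair (vertex set, edge set), edges being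
  2-element vertex sets.\<close>
type_synonym 'a graph = "'a set \<times> 'a set set"

definition verts :: "'a graph \<Rightarrow> 'a set" where "verts G = fst G"
definition edges :: "'a graph \<Rightarrow> 'a set set" where "edges G = snd G"

definition hypercube :: "nat \<Rightarrow> bool list graph" where
  "hypercube q =
     ({xs. length xs = q},
      {{xs, ys} | xs ys. length xs = q \<and> length ys = q \<and>
                         card {i. i < q \<and> xs ! i \<noteq> ys ! i} = 1})"

text \<open>m # G: vertex (v,0) is v' in G', vertex (v,m) is v'' in G'', vertices (v,i)
  with 0<i<m are the internal vertices of the path of length m from v' to v''.\<close>
definition mhash :: "nat \<Rightarrow> 'a graph \<Rightarrow> ('a \<times> nat) graph" where
  "mhash m G =
     (verts G \<times> {0..m},
      {{(u, 0), (v, 0)} | u v. {u, v} \<in> edges G} \<union>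
      {{(u, m), (v, m)} | u v. {u, v} \<in> edges G} \<union>
      {{(v, i), (v, Suc i)} | v i. v \<in> verts G \<and> i < m})"

definition subgraph :: "'a graph \<Rightarrow> 'a graph \<Rightarrow> bool" where
  "subgraph H G \<longleftrightarrow> verts H \<subseteq> verts G \<and> edges H \<subseteq> edges G \<and>
                      (\<forall>e\<in>edges H. e \<subseteq> verts H)"

definition graph_iso :: "'b graph \<Rightarrow> 'a graph \<Rightarrow> bool" where
  "graph_iso H G \<longleftrightarrow> (\<exists>f. bij_betw f (verts H) (verts G) \<and> (`) f ` edges H = edges G)"

definition divides :: "'b graph \<Rightarrow> 'a graph \<Rightarrow> bool" where
  "divides H G \<longleftrightarrow> (\<exists>S :: 'a graph set.
      (\<forall>K\<in>S. subgraph K G \<and> graph_iso H K) \<and>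
      (\<Union>K\<in>S. edges K) = edges G \<and>
      (\<forall>K1\<in>S. \<forall>K2\<in>S. K1 \<noteq> K2 \<longrightarrow> edges K1 \<inter> edges K2 = {}))"

end

theory Submission
  imports Defs
begin

text \<open>Split the words of \<open>Q\<^sub>m\<^sub>+\<^sub>q\<close> as \<open>xs @ ys\<close> with \<open>|xs| = m\<close>, so that
  \<open>Q\<^sub>m\<^sub>+\<^sub>q = Q\<^sub>m \<box> Q\<^sub>q\<close>. Suppose the edges of \<open>Q\<^sub>m\<close> are partitioned into paths of
  length \<open>m\<close> such that every vertex is an endpoint of exactly one path. Each path \<open>p\<close>, together
  with its parallel copies \<open>p \<times> {ys}\<close> and the copies \<open>{p 0} \<times> Q\<^sub>q\<close> and \<open>{p m} \<times> Q\<^sub>q\<close>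
  at its ends, spans a copy of \<open>m#Q\<^sub>q\<close>, and these copies partition the edges of \<open>Q\<^sub>m\<^sub>+\<^sub>q\<close>.

  Such path decompositions exist for every odd \<open>m\<close>: \<open>Q\<^sub>1\<close> is a single edge, and a
  decomposition of \<open>Q\<^sub>n\<close> yields one of \<open>Q\<^sub>n\<^sub>+\<^sub>2 = Q\<^sub>n \<box> C\<^sub>4\<close>: for every path \<open>p\<close>
  and every vertex \<open>c\<close> of the 4-cycle, take \<open>p \<times> {c}\<close> and prolong it at both ends by the
  cycle edge from \<open>c\<close> to its successor.\<close>

section \<open>Hypercubes as products\<close>

fun hamming :: "'a list \<Rightarrow> 'a list \<Rightarrow> nat" where
  "hamming (x # xs) (y # ys) = (if x = y then 0 else 1) + hamming xs ys"
| "hamming _ _ = 0"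

lemma card_mismatches_eq_hamming:
  "length xs = length ys \<Longrightarrow> card {i. i < length xs \<and> xs ! i \<noteq> ys ! i} = hamming xs ys"
proof (induction xs ys rule: hamming.induct)
  case (1 x xs y ys)
  let ?D = "{i. i < length xs \<and> xs ! i \<noteq> ys ! i}"
  have "{i. i < length (x # xs) \<and> (x # xs) ! i \<noteq> (y # ys) ! i} =
        (if x = y then {} else {0}) \<union> Suc ` ?D"
    by (auto simp: nth_Cons' image_iff less_Suc_eq_0_disj split: if_splits)
  moreover have "card (Suc ` ?D) = card ?D"
    by (simp add: card_image)
  ultimately show ?case
    using 1 by (simp add: card_insert_if image_iff)
qed auto

lemma hamming_sym: "hamming xs ys = hamming ys xs"
  by (induction xs ys rule: hamming.induct) auto

lemma hamming_append:
  "length xs = length ys \<Longrightarrow> hamming (xs @ us) (ys @ vs) = hamming xs ys + hamming us vs"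
  by (induction xs ys rule: hamming.induct) auto

lemma hamming_self [simp]: "hamming xs xs = 0"
  by (induction xs) auto

lemma hamming_eq_0_iff: "length xs = length ys \<Longrightarrow> hamming xs ys = 0 \<longleftrightarrow> xs = ys"
  by (induction xs ys rule: hamming.induct) auto

definition cube_adj :: "nat \<Rightarrow> 'a list \<Rightarrow> 'a list \<Rightarrow> bool" where
  "cube_adj n xs ys \<longleftrightarrow> length xs = n \<and> length ys = n \<and> hamming xs ys = 1"

lemma cube_adj_sym: "cube_adj n xs ys \<longleftrightarrow> cube_adj n ys xs"
  by (auto simp: cube_adj_def hamming_sym)

lemma cube_adj_neq: "cube_adj n xs ys \<Longrightarrow> xs \<noteq> ys"
  by (auto simp: cube_adj_def)

lemma verts_hypercube: "verts (hypercube n) = {xs. length xs = n}"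
  by (simp add: verts_def hypercube_def)

lemma mem_edges_hypercube:
  "e \<in> edges (hypercube n) \<longleftrightarrow> (\<exists>xs ys. e = {xs, ys} \<and> cube_adj n xs ys)"
proof -
  have "cube_adj n xs ys \<longleftrightarrow>
          length xs = n \<and> length ys = n \<and> card {i. i < n \<and> xs ! i \<noteq> ys ! i} = 1" for xs ys :: "bool list"
    using card_mismatches_eq_hamming[of xs ys] unfolding cube_adj_def by auto
  then show ?thesis
    unfolding edges_def hypercube_def snd_conv by blast
qed

lemma doubleton_mem_edges_hypercube: "{xs, ys} \<in> edges (hypercube n) \<longleftrightarrow> cube_adj n xs ys"
  by (auto simp: mem_edges_hypercube doubleton_eq_iff cube_adj_sym)

lemma edges_hypercube_subset_verts: "e \<in> edges (hypercube n) \<Longrightarrow> e \<subseteq> verts (hypercube n)"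
  by (auto simp: mem_edges_hypercube verts_hypercube cube_adj_def)

lemma edges_hypercubeE:
  assumes "e \<in> edges (hypercube n)"
  obtains xs ys where "e = {xs, ys}" "xs \<noteq> ys" "length xs = n" "length ys = n"
proof -
  obtain xs ys where "e = {xs, ys}" "cube_adj n xs ys"
    using assms mem_edges_hypercube by blast
  moreover note cube_adj_neq[OF \<open>cube_adj n xs ys\<close>]
  ultimately show thesis
    using that by (simp add: cube_adj_def)
qed

lemma cube_adj_append:
  assumes "length xs = m" "length xs' = m" "length ys = q" "length ys' = q"
  shows "cube_adj (m + q) (xs @ ys) (xs' @ ys') \<longleftrightarrow>
           xs = xs' \<and> cube_adj q ys ys' \<or> ys = ys' \<and> cube_adj m xs xs'"
  using assms hamming_eq_0_iff[of xs xs'] hamming_eq_0_iff[of ys ys']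
  by (auto simp: cube_adj_def hamming_append)

lemma prefix_image_mem_edges_hypercube:
  assumes "length xs = m" "f \<in> edges (hypercube q)"
  shows "(@) xs ` f \<in> edges (hypercube (m + q))"
proof -
  obtain ys ys' where "f = {ys, ys'}" "cube_adj q ys ys'"
    using assms(2) by (auto simp: mem_edges_hypercube)
  moreover have "cube_adj (m + q) (xs @ ys) (xs @ ys')"
    using calculation assms(1) by (simp add: cube_adj_def hamming_append)
  ultimately show ?thesis
    by (simp add: doubleton_mem_edges_hypercube)
qed

lemma suffix_image_mem_edges_hypercube:
  assumes "e \<in> edges (hypercube m)" "length ys = q"
  shows "(\<lambda>xs. xs @ ys) ` e \<in> edges (hypercube (m + q))"
proof -
  obtain xs xs' where "e = {xs, xs'}" "cube_adj m xs xs'"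
    using assms(1) by (auto simp: mem_edges_hypercube)
  moreover have "cube_adj (m + q) (xs @ ys) (xs' @ ys)"
    using calculation assms(2) by (simp add: cube_adj_def hamming_append)
  ultimately show ?thesis
    by (simp add: doubleton_mem_edges_hypercube)
qed

lemma edges_hypercube_addE:
  assumes "e \<in> edges (hypercube (m + q))"
  obtains xs f where "length xs = m" "f \<in> edges (hypercube q)" "e = (@) xs ` f"
  | e' ys where "e' \<in> edges (hypercube m)" "length ys = q" "e = (\<lambda>xs. xs @ ys) ` e'"
proof -
  obtain zs zs' where e: "e = {zs, zs'}" "cube_adj (m + q) zs zs'"
    using assms by (auto simp: mem_edges_hypercube)
  define xs xs' ys ys' where "xs = take m zs" "xs' = take m zs'" "ys = drop m zs" "ys' = drop m zs'"
  have zs: "zs = xs @ ys" "zs' = xs' @ ys'"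
    by (simp_all add: xs_xs'_ys_ys'_def)
  have len: "length xs = m" "length xs' = m" "length ys = q" "length ys' = q"
    using e(2) by (simp_all add: xs_xs'_ys_ys'_def cube_adj_def)
  have "xs = xs' \<and> cube_adj q ys ys' \<or> ys = ys' \<and> cube_adj m xs xs'"
    using e(2) unfolding zs by (rule cube_adj_append[OF len, THEN iffD1])
  then show thesis
  proof
    assume "xs = xs' \<and> cube_adj q ys ys'"
    then have "e = (@) xs ` {ys, ys'}" "{ys, ys'} \<in> edges (hypercube q)"
      by (simp_all add: e zs doubleton_mem_edges_hypercube)
    then show thesis
      using that(1) len(1) by blast
  next
    assume "ys = ys' \<and> cube_adj m xs xs'"
    then have "e = (\<lambda>xs. xs @ ys) ` {xs, xs'}" "{xs, xs'} \<in> edges (hypercube m)"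
      by (simp_all add: e zs doubleton_mem_edges_hypercube)
    then show thesis
      using that(2) len(3) by blast
  qed
qed

lemma prefix_image_eq_iff:
  assumes "length xs = length xs'" "f \<noteq> {}" "f' \<noteq> {}"
  shows "(@) xs ` f = (@) xs' ` f' \<longleftrightarrow> xs = xs' \<and> f = f'"
proof
  assume eq: "(@) xs ` f = (@) xs' ` f'"
  have "take (length xs) ` (@) xs ` f = {xs}" "take (length xs) ` (@) xs' ` f' = {xs'}"
    "drop (length xs) ` (@) xs ` f = f" "drop (length xs) ` (@) xs' ` f' = f'"
    using assms by (auto simp: image_image)
  then show "xs = xs' \<and> f = f'"
    using eq by (metis singleton_inject)
qed simp

lemma suffix_image_eq_iff:
  assumes "\<forall>xs\<in>e \<union> e'. length xs = k" "e \<noteq> {}" "e' \<noteq> {}"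
  shows "(\<lambda>xs. xs @ ys) ` e = (\<lambda>xs. xs @ ys') ` e' \<longleftrightarrow> e = e' \<and> ys = ys'"
proof
  assume eq: "(\<lambda>xs. xs @ ys) ` e = (\<lambda>xs. xs @ ys') ` e'"
  have "take k ` (\<lambda>xs. xs @ ys) ` e = e" "take k ` (\<lambda>xs. xs @ ys') ` e' = e'"
    "drop k ` (\<lambda>xs. xs @ ys) ` e = {ys}" "drop k ` (\<lambda>xs. xs @ ys') ` e' = {ys'}"
    using assms by (force simp: image_image)+
  then show "e = e' \<and> ys = ys'"
    using eq by (metis singleton_inject)
qed simp

lemma prefix_image_neq_suffix_image:
  assumes "length xs = k" "\<forall>zs\<in>e. length zs = k" "e \<noteq> {}" "u \<in> f" "v \<in> f" "u \<noteq> v"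
  shows "(@) xs ` f \<noteq> (\<lambda>zs. zs @ ys) ` e"
proof
  assume eq: "(@) xs ` f = (\<lambda>zs. zs @ ys) ` e"
  have "drop k ` (@) xs ` f = f" "drop k ` (\<lambda>zs. zs @ ys) ` e = {ys}"
    using assms by (force simp: image_image)+
  then have "f = {ys}"
    using eq by simp
  then show False
    using assms(4-6) by blast
qed

section \<open>Path decompositions and copies of \<open>m#Q\<^sub>q\<close>\<close>

lemma divides_if_injective_images_partition_edges:
  fixes H :: "'b graph" and G :: "'a graph" and F :: "('b \<Rightarrow> 'a) set"
  assumes edges_H: "\<And>e. e \<in> edges H \<Longrightarrow> e \<subseteq> verts H"
    and inj: "\<And>f. f \<in> F \<Longrightarrow> inj_on f (verts H)"
    and verts: "\<And>f. f \<in> F \<Longrightarrow> f ` verts H \<subseteq> verts G"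
    and cover: "(\<Union>f\<in>F. (`) f ` edges H) = edges G"
    and disjoint: "\<And>f g e. f \<in> F \<Longrightarrow> g \<in> F \<Longrightarrow> e \<in> (`) f ` edges H \<Longrightarrow> e \<in> (`) g ` edges H \<Longrightarrow> f = g"
  shows "divides H G"
proof -
  define K where "K f = (f ` verts H, (`) f ` edges H)" for f :: "'b \<Rightarrow> 'a"
  have K: "verts (K f) = f ` verts H" "edges (K f) = (`) f ` edges H" for f
    by (simp_all add: K_def verts_def edges_def)
  have "subgraph (K f) G" if "f \<in> F" for f
    unfolding subgraph_def K using verts[OF that] cover that edges_H by blast
  moreover have "graph_iso H (K f)" if "f \<in> F" for f
    unfolding graph_iso_def K using inj[OF that] inj_on_imp_bij_betw by blast
  moreover have "(\<Union>K'\<in>K ` F. edges K') = edges G"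
    using cover by (simp add: K)
  moreover have "edges (K f) \<inter> edges (K g) = {}" if "f \<in> F" "g \<in> F" "K f \<noteq> K g" for f g
    using disjoint[OF that(1,2)] that(3) unfolding K by blast
  ultimately show ?thesis
    unfolding divides_def by (intro exI[of _ "K ` F"]) auto
qed

lemma verts_mhash: "verts (mhash m G) = verts G \<times> {0..m}"
  by (simp add: mhash_def verts_def)

lemma edges_mhash:
  "edges (mhash m G) =
     {{(u, 0), (v, 0)} | u v. {u, v} \<in> edges G} \<union>
     {{(u, m), (v, m)} | u v. {u, v} \<in> edges G} \<union>
     {{(v, i), (v, Suc i)} | v i. v \<in> verts G \<and> i < m}"
  by (simp add: mhash_def edges_def)

lemma edges_mhash_subset_verts:
  assumes "\<And>e. e \<in> edges G \<Longrightarrow> e \<subseteq> verts G" "e \<in> edges (mhash m G)"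
  shows "e \<subseteq> verts (mhash m G)"
  using assms by (auto simp: edges_mhash verts_mhash)

definition path_edges :: "nat \<Rightarrow> (nat \<Rightarrow> 'a) \<Rightarrow> 'a set set" where
  "path_edges n p = (\<lambda>i. {p i, p (Suc i)}) ` {..<n}"

locale cube_path_decomposition =
  fixes n :: nat and P :: "(nat \<Rightarrow> bool list) set"
  assumes length_path: "p \<in> P \<Longrightarrow> i \<le> n \<Longrightarrow> length (p i) = n"
    and inj_on_path: "p \<in> P \<Longrightarrow> inj_on p {0..n}"
    and path_edges_subset: "p \<in> P \<Longrightarrow> path_edges n p \<subseteq> edges (hypercube n)"
    and edge_covered: "e \<in> edges (hypercube n) \<Longrightarrow> \<exists>p\<in>P. e \<in> path_edges n p"
    and edge_unique: "p \<in> P \<Longrightarrow> p' \<in> P \<Longrightarrow> e \<in> path_edges n p \<Longrightarrow> e \<in> path_edges n p' \<Longrightarrow> p = p'"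
    and endpoint_covered: "length xs = n \<Longrightarrow> \<exists>p\<in>P. xs \<in> {p 0, p n}"
    and endpoint_unique:
      "p \<in> P \<Longrightarrow> p' \<in> P \<Longrightarrow> xs \<in> {p 0, p n} \<Longrightarrow> xs \<in> {p' 0, p' n} \<Longrightarrow> p = p'"

definition path_embedding :: "(nat \<Rightarrow> 'a list) \<Rightarrow> 'a list \<times> nat \<Rightarrow> 'a list" where
  "path_embedding p = (\<lambda>(ys, i). p i @ ys)"

lemma image_edges_mhash_hypercube:
  "e \<in> (`) (path_embedding p) ` edges (mhash m (hypercube q)) \<longleftrightarrow>
     (\<exists>xs\<in>{p 0, p m}. \<exists>f\<in>edges (hypercube q). e = (@) xs ` f) \<or>
     (\<exists>e'\<in>path_edges m p. \<exists>ys. length ys = q \<and> e = (\<lambda>xs. xs @ ys) ` e')"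
proof
  assume "e \<in> (`) (path_embedding p) ` edges (mhash m (hypercube q))"
  then obtain e0 where e0: "e0 \<in> edges (mhash m (hypercube q))" and e: "e = path_embedding p ` e0"
    by blast
  from e0 consider (bottom) u v where "{u, v} \<in> edges (hypercube q)" "e0 = {(u, 0), (v, 0)}"
    | (top) u v where "{u, v} \<in> edges (hypercube q)" "e0 = {(u, m), (v, m)}"
    | (rung) ys i where "length ys = q" "i < m" "e0 = {(ys, i), (ys, Suc i)}"
    unfolding edges_mhash verts_hypercube by blast
  then show "(\<exists>xs\<in>{p 0, p m}. \<exists>f\<in>edges (hypercube q). e = (@) xs ` f) \<or>
     (\<exists>e'\<in>path_edges m p. \<exists>ys. length ys = q \<and> e = (\<lambda>xs. xs @ ys) ` e')"
  proof cases
    case bottom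
    then have "e = (@) (p 0) ` {u, v}"
      by (simp add: e path_embedding_def)
    then show ?thesis
      using bottom(1) by (intro disjI1 bexI[of _ "p 0"] bexI[of _ "{u, v}"]) simp_all
  next
    case top
    then have "e = (@) (p m) ` {u, v}"
      by (simp add: e path_embedding_def)
    then show ?thesis
      using top(1) by (intro disjI1 bexI[of _ "p m"] bexI[of _ "{u, v}"]) simp_all
  next
    case rung
    then have "e = (\<lambda>xs. xs @ ys) ` {p i, p (Suc i)}" "{p i, p (Suc i)} \<in> path_edges m p"
      by (simp_all add: e path_embedding_def path_edges_def)
    then show ?thesis
      using rung(1) by (intro disjI2 bexI[of _ "{p i, p (Suc i)}"] exI[of _ ys]) simp_all
  qed
next
  assume "(\<exists>xs\<in>{p 0, p m}. \<exists>f\<in>edges (hypercube q). e = (@) xs ` f) \<or>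
     (\<exists>e'\<in>path_edges m p. \<exists>ys. length ys = q \<and> e = (\<lambda>xs. xs @ ys) ` e')"
  then show "e \<in> (`) (path_embedding p) ` edges (mhash m (hypercube q))"
  proof (elim disjE bexE exE conjE)
    fix xs f
    assume "xs \<in> {p 0, p m}" "f \<in> edges (hypercube q)" "e = (@) xs ` f"
    moreover obtain u v where "f = {u, v}"
      using \<open>f \<in> edges (hypercube q)\<close> edges_hypercubeE by metis
    moreover have "{(u, i), (v, i)} \<in> edges (mhash m (hypercube q))" if "i \<in> {0, m}" for i
      using \<open>f \<in> edges (hypercube q)\<close> \<open>f = {u, v}\<close> that unfolding edges_mhash by blast
    moreover have "(@) (p i) ` {u, v} = path_embedding p ` {(u, i), (v, i)}" for i
      by (simp add: path_embedding_def)
    ultimately show ?thesis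
      by blast
  next
    fix e' ys
    assume "e' \<in> path_edges m p" "length ys = q" "e = (\<lambda>xs. xs @ ys) ` e'"
    then obtain i where "i < m" "e = path_embedding p ` {(ys, i), (ys, Suc i)}"
      by (auto simp: path_edges_def path_embedding_def)
    moreover have "{(ys, i), (ys, Suc i)} \<in> edges (mhash m (hypercube q))"
      using \<open>i < m\<close> \<open>length ys = q\<close> unfolding edges_mhash verts_hypercube by blast
    ultimately show ?thesis
      by blast
  qed
qed

context cube_path_decomposition
begin

lemma path_edgeD:
  assumes "p \<in> P" "e \<in> path_edges n p"
  shows "e \<noteq> {}" "\<forall>xs\<in>e. length xs = n"
  using path_edges_subset[OF assms(1)] assms(2) edges_hypercube_subset_verts
  by (auto simp: path_edges_def verts_hypercube)

lemma endpoint_lift_unique: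
  assumes p: "p \<in> P" and p': "p' \<in> P" and xs: "xs \<in> {p 0, p n}" and xs': "xs' \<in> {p' 0, p' n}"
    and "f \<noteq> {}" "f' \<noteq> {}" "(@) xs ` f = (@) xs' ` f'"
  shows "p = p' \<and> f = f'"
proof -
  have "length xs = length xs'"
    using xs xs' length_path p p' by auto
  then have "xs = xs' \<and> f = f'"
    using assms(5-7) prefix_image_eq_iff by blast
  then show ?thesis
    using endpoint_unique[OF p p'] xs xs' by auto
qed

lemma path_edge_lift_unique:
  assumes p: "p \<in> P" and p': "p' \<in> P" and e: "e \<in> path_edges n p" and e': "e' \<in> path_edges n p'"
    and "(\<lambda>xs. xs @ ys) ` e = (\<lambda>xs. xs @ ys') ` e'"
  shows "p = p' \<and> ys = ys'"
proof -
  have "e \<noteq> {}" "e' \<noteq> {}" "\<forall>xs\<in>e \<union> e'. length xs = n"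
    using path_edgeD p p' e e' by blast+
  then have "e = e' \<and> ys = ys'"
    using assms(5) suffix_image_eq_iff by blast
  then show ?thesis
    using edge_unique[OF p p'] e e' by auto
qed

lemma endpoint_lift_neq_path_edge_lift:
  assumes "p \<in> P" "xs \<in> {p 0, p n}" "p' \<in> P" "e \<in> path_edges n p'"
    and "u \<in> f" "v \<in> f" "u \<noteq> v"
  shows "(@) xs ` f \<noteq> (\<lambda>xs. xs @ ys) ` e"
proof -
  have "length xs = n"
    using assms(1,2) length_path by auto
  moreover have "\<forall>ys\<in>e. length ys = n" "e \<noteq> {}"
    using path_edgeD assms(3,4) by blast+
  ultimately show ?thesis
    by (rule prefix_image_neq_suffix_image[OF _ _ _ assms(5-7)])
qed

lemma inj_on_path_embedding:
  assumes "p \<in> P"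
  shows "inj_on (path_embedding p) (verts (mhash n (hypercube q)))"
proof (rule inj_onI, clarify)
  fix ys i ys' j
  assume "(ys, i) \<in> verts (mhash n (hypercube q))" "(ys', j) \<in> verts (mhash n (hypercube q))"
    and eq: "path_embedding p (ys, i) = path_embedding p (ys', j)"
  then have "i \<in> {0..n}" "j \<in> {0..n}"
    by (simp_all add: verts_mhash)
  moreover have "p i = p j \<and> ys = ys'"
    using eq calculation length_path[OF assms] by (simp add: path_embedding_def)
  ultimately show "ys = ys' \<and> i = j"
    using inj_on_path[OF assms] by (auto dest: inj_onD)
qed

lemma path_embedding_verts:
  "p \<in> P \<Longrightarrow> path_embedding p ` verts (mhash n (hypercube q)) \<subseteq> verts (hypercube (n + q))"
  by (auto simp: verts_mhash verts_hypercube path_embedding_def length_path)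

lemma image_edges_mhash_subset:
  assumes "p \<in> P"
  shows "(`) (path_embedding p) ` edges (mhash n (hypercube q)) \<subseteq> edges (hypercube (n + q))"
proof
  fix e
  assume "e \<in> (`) (path_embedding p) ` edges (mhash n (hypercube q))"
  then show "e \<in> edges (hypercube (n + q))"
    unfolding image_edges_mhash_hypercube
  proof (elim disjE bexE exE conjE)
    fix xs f
    assume "xs \<in> {p 0, p n}" "f \<in> edges (hypercube q)" "e = (@) xs ` f"
    then show ?thesis
      using prefix_image_mem_edges_hypercube length_path[OF assms] by auto
  next
    fix e' ys
    assume "e' \<in> path_edges n p" "length ys = q" "e = (\<lambda>xs. xs @ ys) ` e'"
    then show ?thesis
      using suffix_image_mem_edges_hypercube path_edges_subset[OF assms] by blast
  qed
qed

lemma edges_hypercube_covered: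
  assumes "e \<in> edges (hypercube (n + q))"
  shows "\<exists>p\<in>P. e \<in> (`) (path_embedding p) ` edges (mhash n (hypercube q))"
  using assms
proof (cases rule: edges_hypercube_addE)
  case (1 xs f)
  obtain p where "p \<in> P" "xs \<in> {p 0, p n}"
    using endpoint_covered \<open>length xs = n\<close> by blast
  moreover have "e \<in> (`) (path_embedding p) ` edges (mhash n (hypercube q))"
    unfolding image_edges_mhash_hypercube
    using calculation(2) 1(2,3) by (intro disjI1 bexI)
  ultimately show ?thesis
    by blast
next
  case (2 e' ys)
  obtain p where "p \<in> P" "e' \<in> path_edges n p"
    using edge_covered \<open>e' \<in> edges (hypercube n)\<close> by blast
  moreover have "e \<in> (`) (path_embedding p) ` edges (mhash n (hypercube q))"
    unfolding image_edges_mhash_hypercube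
    using calculation(2) 2(2,3) by (intro disjI2 bexI exI conjI)
  ultimately show ?thesis
    by blast
qed

lemma image_edges_mhash_unique:
  assumes p: "p \<in> P" and p': "p' \<in> P"
    and "e \<in> (`) (path_embedding p) ` edges (mhash n (hypercube q))"
    and "e \<in> (`) (path_embedding p') ` edges (mhash n (hypercube q))"
  shows "p = p'"
  using assms(3,4) unfolding image_edges_mhash_hypercube
proof (elim disjE bexE exE conjE)
  fix xs f xs' f'
  assume "xs \<in> {p 0, p n}" "f \<in> edges (hypercube q)" "e = (@) xs ` f"
    "xs' \<in> {p' 0, p' n}" "f' \<in> edges (hypercube q)" "e = (@) xs' ` f'"
  then show ?thesis
    using endpoint_lift_unique[OF p p'] by (metis edges_hypercubeE insert_not_empty)
next
  fix xs f e' ys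
  assume "xs \<in> {p 0, p n}" "f \<in> edges (hypercube q)" "e = (@) xs ` f"
    "e' \<in> path_edges n p'" "e = (\<lambda>xs. xs @ ys) ` e'"
  then show ?thesis
    using endpoint_lift_neq_path_edge_lift[OF p _ p'] by (metis edges_hypercubeE insertI1 insertI2 singletonI)
next
  fix e' ys xs f
  assume "e' \<in> path_edges n p" "e = (\<lambda>xs. xs @ ys) ` e'"
    "xs \<in> {p' 0, p' n}" "f \<in> edges (hypercube q)" "e = (@) xs ` f"
  then show ?thesis
    using endpoint_lift_neq_path_edge_lift[OF p' _ p] by (metis edges_hypercubeE insertI1 insertI2 singletonI)
next
  fix e' ys e'' ys'
  assume "e' \<in> path_edges n p" "e = (\<lambda>xs. xs @ ys) ` e'"
    "e'' \<in> path_edges n p'" "e = (\<lambda>xs. xs @ ys') ` e''"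
  then show ?thesis
    using path_edge_lift_unique[OF p p'] by metis
qed

lemma divides_mhash_hypercube: "divides (mhash n (hypercube q)) (hypercube (n + q))"
proof (rule divides_if_injective_images_partition_edges[where F = "path_embedding ` P"])
  show "e \<subseteq> verts (mhash n (hypercube q))" if "e \<in> edges (mhash n (hypercube q))" for e
    using edges_mhash_subset_verts edges_hypercube_subset_verts that by blast
  show "(\<Union>f\<in>path_embedding ` P. (`) f ` edges (mhash n (hypercube q))) = edges (hypercube (n + q))"
    unfolding image_image
  proof
    show "(\<Union>p\<in>P. (`) (path_embedding p) ` edges (mhash n (hypercube q))) \<subseteq> edges (hypercube (n + q))"
      by (rule UN_least) (rule image_edges_mhash_subset)
    show "edges (hypercube (n + q)) \<subseteq> (\<Union>p\<in>P. (`) (path_embedding p) ` edges (mhash n (hypercube q)))"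
    proof
      fix e
      assume "e \<in> edges (hypercube (n + q))"
      then obtain p where "p \<in> P" "e \<in> (`) (path_embedding p) ` edges (mhash n (hypercube q))"
        using edges_hypercube_covered by blast
      then show "e \<in> (\<Union>p\<in>P. (`) (path_embedding p) ` edges (mhash n (hypercube q)))"
        by blast
    qed
  qed
  show "f = g"
    if fg: "f \<in> path_embedding ` P" "g \<in> path_embedding ` P"
      and e: "e \<in> (`) f ` edges (mhash n (hypercube q))" "e \<in> (`) g ` edges (mhash n (hypercube q))"
    for f g e
  proof -
    obtain p p' where "p \<in> P" "f = path_embedding p" "p' \<in> P" "g = path_embedding p'"
      using fg by blast
    then show "f = g"
      using image_edges_mhash_unique[of p p' e q] e by simp
  qed
qed (use inj_on_path_embedding path_embedding_verts in blast)+

end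

section \<open>Path decompositions of odd-dimensional cubes\<close>

lemma length_1_cases: "length xs = 1 \<Longrightarrow> xs = [False] \<or> xs = [True]"
  by (cases xs) auto

lemma edges_hypercube_1: "edges (hypercube 1) = {{[False], [True]}}"
proof -
  have "cube_adj 1 xs ys \<longleftrightarrow> {xs, ys} = {[False], [True]}" for xs ys :: "bool list"
    by (auto simp: cube_adj_def doubleton_eq_iff length_Suc_conv split: if_splits)
  then show ?thesis
    unfolding set_eq_iff mem_edges_hypercube by blast
qed

lemma cube_path_decomposition_1:
  "cube_path_decomposition 1 {\<lambda>i. if i = 0 then [False] else [True]}"
  by unfold_locales
    (auto simp: path_edges_def edges_hypercube_1[simplified] inj_on_def
      dest: length_1_cases[simplified])

fun square_vertex :: "bool \<times> bool \<Rightarrow> bool list" where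
  "square_vertex (a, b) = [a, b]"

text \<open>The successor along the Hamiltonian cycle 00, 01, 11, 10 of the square \<open>Q\<^sub>2\<close>.\<close>
fun square_succ :: "bool \<times> bool \<Rightarrow> bool \<times> bool" where
  "square_succ (a, b) = (b, \<not> a)"

definition square_edge :: "bool \<times> bool \<Rightarrow> bool list set" where
  "square_edge c = {square_vertex c, square_vertex (square_succ c)}"

lemma length_square_vertex [simp]: "length (square_vertex c) = 2"
  by (cases c) simp

lemma square_vertex_inject [simp]: "square_vertex c = square_vertex d \<longleftrightarrow> c = d"
  by (cases c; cases d) simp

lemma length_2_square_vertex: "length xs = 2 \<Longrightarrow> \<exists>c. xs = square_vertex c"
  by (cases xs rule: list.exhaust; cases "tl xs" rule: list.exhaust) auto

lemma surj_square_succ: "\<exists>c. d = square_succ c"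
proof -
  obtain a b where "d = (a, b)"
    by (cases d)
  then have "d = square_succ (\<not> b, a)"
    by simp
  then show ?thesis ..
qed

lemma square_succ_inject [simp]: "square_succ c = square_succ d \<longleftrightarrow> c = d"
  by (cases c; cases d) auto

lemma square_succ_neq [simp]: "square_succ c \<noteq> c" "c \<noteq> square_succ c"
  by (cases c; auto)+

lemma square_edge_inject [simp]: "square_edge c = square_edge d \<longleftrightarrow> c = d"
  by (cases c; cases d) (auto simp: square_edge_def doubleton_eq_iff)

lemma cube_adj_square_vertex:
  "cube_adj 2 (square_vertex c) (square_vertex d) \<longleftrightarrow> d = square_succ c \<or> c = square_succ d"
  by (cases c; cases d) (auto simp: cube_adj_def)

lemma edges_hypercube_2: "edges (hypercube 2) = range square_edge"
proof (rule set_eqI)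
  fix e
  show "e \<in> edges (hypercube 2) \<longleftrightarrow> e \<in> range square_edge"
  proof
    assume "e \<in> edges (hypercube 2)"
    then obtain xs ys where e: "e = {xs, ys}" "cube_adj 2 xs ys"
      by (auto simp: mem_edges_hypercube)
    then obtain c d where "xs = square_vertex c" "ys = square_vertex d"
      by (meson cube_adj_def length_2_square_vertex)
    then have "e = square_edge c \<or> e = square_edge d"
      using e cube_adj_square_vertex by (auto simp: square_edge_def insert_commute)
    then show "e \<in> range square_edge"
      by blast
  next
    assume "e \<in> range square_edge"
    then obtain c where "e = {square_vertex c, square_vertex (square_succ c)}"
      by (auto simp: square_edge_def)
    then show "e \<in> edges (hypercube 2)"
      by (simp add: doubleton_mem_edges_hypercube cube_adj_square_vertex)
  qed
qed

text \<open>The path \<open>p \<times> {c}\<close> in \<open>Q\<^sub>n \<box> Q\<^sub>2\<close>, prolonged at both ends by the square edge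
  from \<open>c\<close> to \<open>square_succ c\<close>; truncated subtraction makes index \<open>0\<close> pick \<open>p 0\<close>.\<close>

definition extend_path :: "nat \<Rightarrow> (nat \<Rightarrow> bool list) \<Rightarrow> bool \<times> bool \<Rightarrow> nat \<Rightarrow> bool list" where
  "extend_path n p c i =
     p (min n (i - 1)) @ square_vertex (if i = 0 \<or> i = n + 2 then square_succ c else c)"

lemma extend_path_endpoints:
  "{extend_path n p c 0, extend_path n p c (n + 2)} =
     (\<lambda>xs. xs @ square_vertex (square_succ c)) ` {p 0, p n}"
  by (simp add: extend_path_def)

lemma path_edges_extend_path:
  "path_edges (n + 2) (extend_path n p c) =
     (\<lambda>xs. (@) xs ` square_edge c) ` {p 0, p n} \<union>
     (`) (\<lambda>xs. xs @ square_vertex c) ` path_edges n p"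
proof -
  let ?q = "extend_path n p c"
  have "{..<n + 2} = insert (Suc n) {..<Suc n}"
    by auto
  also have "\<dots> = {0, Suc n} \<union> Suc ` {..<n}"
    by (auto simp: lessThan_Suc_eq_insert_0)
  finally have indices: "{..<n + 2} = {0, Suc n} \<union> Suc ` {..<n}" .
  have "{?q 0, ?q 1} = (@) (p 0) ` square_edge c"
    "{?q (Suc n), ?q (Suc (Suc n))} = (@) (p n) ` square_edge c"
    by (auto simp: extend_path_def square_edge_def)
  moreover have "(\<lambda>i. {?q (Suc i), ?q (Suc (Suc i))}) ` {..<n} =
      (`) (\<lambda>xs. xs @ square_vertex c) ` path_edges n p"
    unfolding path_edges_def image_image
    by (rule image_cong) (auto simp: extend_path_def)
  ultimately show ?thesis
    unfolding path_edges_def indices image_Un image_image by simp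
qed

lemma inj_on_extend_path:
  assumes "inj_on p {0..n}" "0 < n" "\<And>i. i \<le> n \<Longrightarrow> length (p i) = n"
  shows "inj_on (extend_path n p c) {0..n + 2}"
proof (rule inj_onI)
  fix i j
  assume ij: "i \<in> {0..n + 2}" "j \<in> {0..n + 2}" and eq: "extend_path n p c i = extend_path n p c j"
  have "p (min n (i - 1)) = p (min n (j - 1))"
    and tag: "(i = 0 \<or> i = n + 2) \<longleftrightarrow> (j = 0 \<or> j = n + 2)"
    using eq assms(3) by (auto simp: extend_path_def dest: sym split: if_splits)
  then have "min n (i - 1) = min n (j - 1)"
    using assms(1) by (simp add: inj_on_def)
  then show "i = j"
    using ij tag assms(2) by auto
qed

context cube_path_decomposition
begin

lemma path_edges_extend_pathE:
  assumes "e \<in> path_edges (n + 2) (extend_path n p c)"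
  obtains xs where "xs \<in> {p 0, p n}" "e = (@) xs ` square_edge c"
  | e' where "e' \<in> path_edges n p" "e = (\<lambda>xs. xs @ square_vertex c) ` e'"
  using assms unfolding path_edges_extend_path by blast

lemma extend_path_edge_unique:
  assumes p: "p \<in> P" and p': "p' \<in> P"
    and e: "e \<in> path_edges (n + 2) (extend_path n p c)" "e \<in> path_edges (n + 2) (extend_path n p' c')"
  shows "p = p' \<and> c = c'"
proof -
  have square_edge: "square_vertex d \<in> square_edge d" "square_vertex (square_succ d) \<in> square_edge d"
    "square_vertex d \<noteq> square_vertex (square_succ d)" "square_edge d \<noteq> {}" for d
    by (auto simp: square_edge_def)
  show ?thesis
  proof (cases rule: path_edges_extend_pathE[OF e(1)]; cases rule: path_edges_extend_pathE[OF e(2)])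
    fix xs xs'
    assume "xs \<in> {p 0, p n}" "e = (@) xs ` square_edge c" "xs' \<in> {p' 0, p' n}" "e = (@) xs' ` square_edge c'"
    then have "p = p' \<and> square_edge c = square_edge c'"
      using endpoint_lift_unique[OF p p'] square_edge(4) by metis
    then show ?thesis
      by simp
  next
    fix xs e'
    assume "xs \<in> {p 0, p n}" "e = (@) xs ` square_edge c"
      "e' \<in> path_edges n p'" "e = (\<lambda>xs. xs @ square_vertex c') ` e'"
    then show ?thesis
      using endpoint_lift_neq_path_edge_lift[OF p _ p'] square_edge by metis
  next
    fix e' xs'
    assume "e' \<in> path_edges n p" "e = (\<lambda>xs. xs @ square_vertex c) ` e'"
      "xs' \<in> {p' 0, p' n}" "e = (@) xs' ` square_edge c'"
    then show ?thesis
      using endpoint_lift_neq_path_edge_lift[OF p' _ p] square_edge by metis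
  next
    fix e' e''
    assume "e' \<in> path_edges n p" "e = (\<lambda>xs. xs @ square_vertex c) ` e'"
      "e'' \<in> path_edges n p'" "e = (\<lambda>xs. xs @ square_vertex c') ` e''"
    then have "p = p' \<and> square_vertex c = square_vertex c'"
      using path_edge_lift_unique[OF p p'] by metis
    then show ?thesis
      by simp
  qed
qed

lemma extend_path_edge_covered:
  assumes "e \<in> edges (hypercube (n + 2))"
  shows "\<exists>p\<in>P. \<exists>c. e \<in> path_edges (n + 2) (extend_path n p c)"
  using assms
proof (cases rule: edges_hypercube_addE)
  case (1 xs f)
  obtain c where "f = square_edge c"
    using \<open>f \<in> edges (hypercube 2)\<close> by (auto simp: edges_hypercube_2)
  moreover obtain p where "p \<in> P" "xs \<in> {p 0, p n}"
    using endpoint_covered \<open>length xs = n\<close> by blast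
  ultimately have "e \<in> path_edges (n + 2) (extend_path n p c)"
    using \<open>e = (@) xs ` f\<close> unfolding path_edges_extend_path by blast
  then show ?thesis
    using \<open>p \<in> P\<close> by blast
next
  case (2 e' ys)
  obtain c where "ys = square_vertex c"
    using \<open>length ys = 2\<close> length_2_square_vertex by blast
  moreover obtain p where "p \<in> P" "e' \<in> path_edges n p"
    using edge_covered \<open>e' \<in> edges (hypercube n)\<close> by blast
  ultimately have "e \<in> path_edges (n + 2) (extend_path n p c)"
    using \<open>e = (\<lambda>xs. xs @ ys) ` e'\<close> unfolding path_edges_extend_path by blast
  then show ?thesis
    using \<open>p \<in> P\<close> by blast
qed

lemma extend_path_endpoint_covered:
  assumes "length zs = n + 2"
  shows "\<exists>p\<in>P. \<exists>c. zs \<in> {extend_path n p c 0, extend_path n p c (n + 2)}"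
proof -
  have "length (drop n zs) = 2" "length (take n zs) = n"
    using assms by simp_all
  obtain d where d: "drop n zs = square_vertex d"
    using length_2_square_vertex \<open>length (drop n zs) = 2\<close> by blast
  obtain c where c: "d = square_succ c"
    using surj_square_succ by blast
  obtain p where "p \<in> P" "take n zs \<in> {p 0, p n}"
    using endpoint_covered \<open>length (take n zs) = n\<close> by blast
  moreover have "zs = take n zs @ square_vertex (square_succ c)"
    using d c by (metis append_take_drop_id)
  ultimately show ?thesis
    unfolding extend_path_endpoints by blast
qed

lemma extend_path_endpoint_unique:
  assumes p: "p \<in> P" and p': "p' \<in> P"
    and "zs \<in> {extend_path n p c 0, extend_path n p c (n + 2)}"
    and "zs \<in> {extend_path n p' c' 0, extend_path n p' c' (n + 2)}"
  shows "p = p' \<and> c = c'"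
proof -
  obtain xs xs' where xs: "xs \<in> {p 0, p n}" "xs' \<in> {p' 0, p' n}"
    and zs: "zs = xs @ square_vertex (square_succ c)" "zs = xs' @ square_vertex (square_succ c')"
    using assms(3,4) unfolding extend_path_endpoints by blast
  have "length xs = n" "length xs' = n"
    using xs length_path p p' by auto
  then have "xs = xs' \<and> c = c'"
    using zs by auto
  then show ?thesis
    using endpoint_unique[OF p p'] xs by auto
qed

lemma cube_path_decomposition_extend:
  assumes "0 < n"
  shows "cube_path_decomposition (n + 2) {extend_path n p c | p c. p \<in> P}"
proof
  fix q i
  assume "q \<in> {extend_path n p c | p c. p \<in> P}"
  then obtain p c where q: "q = extend_path n p c" and p: "p \<in> P"
    by blast
  show "i \<le> n + 2 \<Longrightarrow> length (q i) = n + 2"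
    using length_path[OF p] by (simp add: q extend_path_def)
  show "inj_on q {0..n + 2}"
    using inj_on_extend_path inj_on_path[OF p] assms length_path[OF p] q by blast
  have "(@) xs ` square_edge c \<in> edges (hypercube (n + 2))" if "length xs = n" for xs
    using prefix_image_mem_edges_hypercube[OF that, of "square_edge c" 2]
    unfolding edges_hypercube_2 by blast
  moreover have "(\<lambda>xs. xs @ square_vertex c) ` e \<in> edges (hypercube (n + 2))"
    if "e \<in> path_edges n p" for e
    using suffix_image_mem_edges_hypercube[of e n "square_vertex c" 2] path_edges_subset[OF p] that
    by auto
  ultimately show "path_edges (n + 2) q \<subseteq> edges (hypercube (n + 2))"
    using length_path[OF p] unfolding q path_edges_extend_path by auto
next
  show "\<exists>q\<in>{extend_path n p c | p c. p \<in> P}. e \<in> path_edges (n + 2) q"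
    if "e \<in> edges (hypercube (n + 2))" for e
    using extend_path_edge_covered[OF that] by blast
  show "q = q'"
    if "q \<in> {extend_path n p c | p c. p \<in> P}" "q' \<in> {extend_path n p c | p c. p \<in> P}"
      and "e \<in> path_edges (n + 2) q" "e \<in> path_edges (n + 2) q'" for q q' e
    using that extend_path_edge_unique by blast
  show "\<exists>q\<in>{extend_path n p c | p c. p \<in> P}. zs \<in> {q 0, q (n + 2)}"
    if "length zs = n + 2" for zs
    using extend_path_endpoint_covered[OF that] by blast
  show "q = q'"
    if "q \<in> {extend_path n p c | p c. p \<in> P}" "q' \<in> {extend_path n p c | p c. p \<in> P}"
      and "zs \<in> {q 0, q (n + 2)}" "zs \<in> {q' 0, q' (n + 2)}" for q q' zs
    using that extend_path_endpoint_unique by blast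
qed

end

lemma cube_path_decomposition_odd: "\<exists>P. cube_path_decomposition (2 * k + 1) P"
proof (induction k)
  case 0
  then show ?case
    using cube_path_decomposition_1 by auto
next
  case (Suc k)
  then obtain P where "cube_path_decomposition (2 * k + 1) P"
    by blast
  then have "cube_path_decomposition (2 * k + 1 + 2) {extend_path (2 * k + 1) p c | p c. p \<in> P}"
    by (rule cube_path_decomposition.cube_path_decomposition_extend) simp
  moreover have "2 * k + 1 + 2 = 2 * Suc k + 1"
    by simp
  ultimately show ?case
    by metis
qed

theorem lemma6:
  fixes m q :: nat
  assumes "odd m" and "m \<ge> 1" and "q \<ge> 1"
  shows "divides (mhash m (hypercube q)) (hypercube (m + q))"
proof -
  obtain k where "m = 2 * k + 1"
    using \<open>odd m\<close> oddE by blast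
  then obtain P where "cube_path_decomposition m P"
    using cube_path_decomposition_odd by blast
  then show ?thesis
    by (rule cube_path_decomposition.divides_mhash_hypercube)
qed

end
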